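(* Let $n\geq2$ and $1\leq k\leq n$ be integers and let $\overline\eta:\Lambda^1(\mathbb R^n)\to\Lambda^k(\mathbb R^n)$ be a linear map. Then there is $\eta\in\Lambda^{k-1}(\mathbb R^n)$ such that $\overline\eta(\theta)=\theta\wedge\eta$ for every $\theta\in\Lambda^1(\mathbb R^n)$ if and only if $\theta\wedge\overline\eta(\theta)=0$ for every $\theta\in\Lambda^1(\mathbb R^n)$.
   Context: $\Lambda^k(\mathbb R^n)$ denotes the real vector space of alternating $k$-linear forms on $\mathbb R^n$, with $\Lambda^0(\mathbb R^n)=\mathbb R$, and $\wedge$ is the exterior product. *)

theory Defs
  imports "HOL-Analysis.Analysis" "HOL-Combinatorics.Permutations"
begin

text \<open>A k-form on R^n (n = CARD('n)) is a function of a sequence of vectors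
  (indexed by nat) that depends only on the first k arguments, is linear in each
  of them, and vanishes whenever two of them coincide (alternating).
  For k = 0 these are exactly the constant functions, i.e. Lambda^0 = R.\<close>

type_synonym 'n form = "(nat \<Rightarrow> real^'n) \<Rightarrow> real"

definition alt_form :: "nat \<Rightarrow> 'n::finite form \<Rightarrow> bool" where
  "alt_form k \<omega> \<longleftrightarrow>
     (\<forall>v w. (\<forall>i<k. v i = w i) \<longrightarrow> \<omega> v = \<omega> w) \<and>
     (\<forall>v. \<forall>i<k. linear (\<lambda>x. \<omega> (v(i := x)))) \<and>
     (\<forall>v i j. i < k \<and> j < k \<and> i \<noteq> j \<and> v i = v j \<longrightarrow> \<omega> v = 0)"

definition wedge :: "nat \<Rightarrow> nat \<Rightarrow> 'n::finite form \<Rightarrow> 'n form \<Rightarrow> 'n form" where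
  "wedge k l \<alpha> \<beta> = (\<lambda>v. (\<Sum>\<sigma>\<in>{\<sigma>. \<sigma> permutes {..<k+l}}.
        of_int (sign \<sigma>) * \<alpha> (\<lambda>i. v (\<sigma> i)) * \<beta> (\<lambda>i. v (\<sigma> (i + k))))
      / (fact k * fact l))"

end

theory Submission
  imports Defs
begin

text \<open>For a 1-form \<theta> and a k-form \<beta>, the wedge product is the Laplace expansion
  (\<theta> \<and> \<beta>)(v_0, ..., v_k) = \<Sum>_m (-1)^m \<theta>(v_m) \<beta>(v_0, ..., v_m omitted, ..., v_k).
  In this form \<theta> \<and> (\<theta> \<and> \<eta>) = 0, because the terms of the double expansion indexed by
  (m, q) and (q, m) cancel.

  Conversely, if \<theta> \<and> \<eta>bar(\<theta>) = 0 for all \<theta>, polarization gives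
  \<theta> \<and> \<eta>bar(dx_j) + dx_j \<and> \<eta>bar(\<theta>) = 0. Contract this with e_j, writing
  \<iota>_a \<beta> = \<beta>(a, -), and sum over j. Since \<iota>_a(\<theta> \<and> \<beta>) = \<theta>(a) \<beta> - \<theta> \<and> \<iota>_a \<beta>,
  \<Sum>_j \<theta>(e_j) \<eta>bar(dx_j) = \<eta>bar(\<theta>) and \<Sum>_j dx_j \<and> \<iota>_(e_j) \<beta> = k \<beta> for every k-form \<beta>,
  this yields (n + 1 - k) \<eta>bar(\<theta>) = \<theta> \<and> \<Sum>_j \<iota>_(e_j) \<eta>bar(dx_j).\<close>

lemma alt_form_cong:
  assumes "alt_form k \<beta>" and "\<And>i. i < k \<Longrightarrow> v i = w i"
  shows "\<beta> v = \<beta> w"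
  using assms unfolding alt_form_def by blast

lemma alt_form_linear:
  assumes "alt_form k \<beta>" and "i < k"
  shows "linear (\<lambda>x. \<beta> (v(i := x)))"
  using assms unfolding alt_form_def by blast

lemma alt_form_eq_zero:
  assumes "alt_form k \<beta>" and "i < k" "j < k" "i \<noteq> j" "v i = v j"
  shows "\<beta> v = 0"
  using assms unfolding alt_form_def by blast

lemma alt_form_transpose:
  assumes \<beta>: "alt_form k \<beta>" and "a < k" "b < k" "a \<noteq> b"
  shows "\<beta> (v \<circ> Transposition.transpose a b) = - \<beta> v"
proof -
  have add: "\<beta> (w(i := x + y)) = \<beta> (w(i := x)) + \<beta> (w(i := y))" if "i < k" for w i x y
    using linear_add[OF alt_form_linear[OF \<beta> that]] by simp
  have zero: "\<beta> (w(a := x, b := x)) = 0" "\<beta> (w(b := x, a := x)) = 0" for w x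
    using assms by (auto intro: alt_form_eq_zero[of k \<beta> a b])
  define s where "s = v a + v b"
  have "0 = \<beta> (v(a := s, b := v a)) + \<beta> (v(a := s, b := v b))"
    using zero(1)[of v s] add[of b "v(a := s)"] \<open>b < k\<close> unfolding s_def by simp
  moreover have "\<beta> (v(a := s, b := v a)) = \<beta> (v \<circ> Transposition.transpose a b)"
  proof -
    have "v(a := s, b := v a) = (v(b := v a))(a := v a + v b)"
      using \<open>a \<noteq> b\<close> by (auto simp: fun_eq_iff s_def)
    moreover have "v(b := v a, a := v b) = v \<circ> Transposition.transpose a b"
      by (auto simp: fun_eq_iff Transposition.transpose_def)
    ultimately show ?thesis
      using add[of a "v(b := v a)"] zero(2)[of v "v a"] \<open>a < k\<close> by simp
  qed
  moreover have "\<beta> (v(a := s, b := v b)) = \<beta> v"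
    using add[of a v] alt_form_eq_zero[OF \<beta> \<open>a < k\<close> \<open>b < k\<close> \<open>a \<noteq> b\<close>, of "v(a := v b)"]
      \<open>a < k\<close> \<open>a \<noteq> b\<close> unfolding s_def by (simp add: fun_upd_twist)
  ultimately show ?thesis by simp
qed

lemma alt_form_permute:
  assumes "alt_form k \<beta>" and "\<tau> permutes {..<k}"
  shows "\<beta> (v \<circ> \<tau>) = of_int (sign \<tau>) * \<beta> v"
  using assms(2) finite_lessThan
proof (induction arbitrary: v rule: permutes_induct)
  case id
  then show ?case by simp
next
  case (swap a b p)
  have "permutation p"
    using swap.hyps(4) permutation_permutes by blast
  then have sign: "sign (Transposition.transpose a b \<circ> p) = - sign p"
    using swap.hyps by (simp add: sign_compose[OF permutation_swap_id] sign_swap_id)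
  have "\<beta> (v \<circ> (Transposition.transpose a b \<circ> p)) = \<beta> ((v \<circ> Transposition.transpose a b) \<circ> p)"
    by (simp add: o_assoc)
  also have "\<dots> = of_int (sign p) * \<beta> (v \<circ> Transposition.transpose a b)"
    using swap.IH swap.hyps(4) by blast
  also have "\<dots> = - of_int (sign p) * \<beta> v"
    using alt_form_transpose[OF assms(1)] swap.hyps by simp
  finally show ?case
    by (simp del: comp_apply add: sign)
qed

lemma linear_scale_real: "linear g \<Longrightarrow> linear (\<lambda>x. c * g x :: real)"
  using linear_compose_scale_right[of g c] by simp

lemma alt_form_lincomb:
  fixes f g :: "'n::finite form"
  assumes "alt_form k f" and "alt_form k g"
  shows "alt_form k (\<lambda>v. a * f v + b * g v)"
  unfolding alt_form_def
proof (intro conjI allI impI)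
  fix v w :: "nat \<Rightarrow> real^'n"
  assume "\<forall>i<k. v i = w i"
  then show "a * f v + b * g v = a * f w + b * g w"
    using alt_form_cong[OF assms(1)] alt_form_cong[OF assms(2)] by metis
next
  fix v :: "nat \<Rightarrow> real^'n" and i
  assume "i < k"
  then show "linear (\<lambda>x. a * f (v(i := x)) + b * g (v(i := x)))"
    using alt_form_linear[OF assms(1)] alt_form_linear[OF assms(2)]
    by (intro linear_compose_add linear_scale_real) auto
next
  fix v :: "nat \<Rightarrow> real^'n" and i j
  assume "i < k \<and> j < k \<and> i \<noteq> j \<and> v i = v j"
  then show "a * f v + b * g v = 0"
    using alt_form_eq_zero[OF assms(1)] alt_form_eq_zero[OF assms(2)] by auto
qed

lemma alt_form_sum:
  fixes f :: "'b \<Rightarrow> 'n::finite form"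
  assumes "finite S" and "\<And>j. j \<in> S \<Longrightarrow> alt_form k (f j)"
  shows "alt_form k (\<lambda>v. \<Sum>j\<in>S. c j * f j v)"
  unfolding alt_form_def
proof (intro conjI allI impI)
  fix v w :: "nat \<Rightarrow> real^'n"
  assume "\<forall>i<k. v i = w i"
  then show "(\<Sum>j\<in>S. c j * f j v) = (\<Sum>j\<in>S. c j * f j w)"
    using alt_form_cong[OF assms(2)] by (metis (no_types, lifting) sum.cong)
next
  fix v :: "nat \<Rightarrow> real^'n" and i
  assume "i < k"
  then show "linear (\<lambda>x. \<Sum>j\<in>S. c j * f j (v(i := x)))"
    using alt_form_linear[OF assms(2)] assms(1)
    by (intro linear_compose_sum ballI linear_scale_real) auto
next
  fix v :: "nat \<Rightarrow> real^'n" and i j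
  assume "i < k \<and> j < k \<and> i \<noteq> j \<and> v i = v j"
  then show "(\<Sum>j\<in>S. c j * f j v) = 0"
    using alt_form_eq_zero[OF assms(2)] by auto
qed

definition vcons :: "'a \<Rightarrow> (nat \<Rightarrow> 'a) \<Rightarrow> nat \<Rightarrow> 'a" where
  "vcons a w j = (if j = 0 then a else w (j - 1))"

definition skip :: "nat \<Rightarrow> nat \<Rightarrow> nat" where
  "skip m j = (if j < m then j else Suc j)"

definition unskip :: "nat \<Rightarrow> nat \<Rightarrow> nat" where
  "unskip m q = (if q < m then q else q - 1)"

lemma vcons_0 [simp]: "vcons a w 0 = a"
  by (simp add: vcons_def)

lemma vcons_Suc [simp]: "vcons a w (Suc j) = w j"
  by (simp add: vcons_def)

lemma comp_vcons: "f \<circ> vcons a w = vcons (f a) (f \<circ> w)"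
  by (auto simp: fun_eq_iff vcons_def)

lemma vcons_comp_Suc [simp]: "vcons a w \<circ> Suc = w"
  by (simp add: fun_eq_iff)

lemma vcons_comp_skip_0 [simp]: "vcons a w \<circ> skip 0 = w"
  by (simp add: fun_eq_iff skip_def)

lemma vcons_comp_skip_Suc [simp]: "vcons a w \<circ> skip (Suc m) = vcons a (w \<circ> skip m)"
  by (auto simp: fun_eq_iff skip_def vcons_def)

lemma inj_skip: "inj (skip m)"
  by (auto simp: inj_def skip_def split: if_splits)

lemma skip_unskip: "q \<noteq> m \<Longrightarrow> skip m (unskip m q) = q"
  by (auto simp: skip_def unskip_def)

lemma skip_comp_skip: "q < m \<Longrightarrow> skip m \<circ> skip q = skip q \<circ> skip (m - 1)"
  by (auto simp: fun_eq_iff skip_def)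

lemma bij_betw_unskip:
  assumes "m < Suc n"
  shows "bij_betw (unskip m) ({..<Suc n} - {m}) {..<n}"
  by (rule bij_betw_byWitness[where f' = "skip m"]) (use assms in \<open>auto simp: skip_def unskip_def\<close>)

lemma vcons_skip_permutes:
  assumes "m < K"
  shows "vcons m (skip m) permutes {..<K} \<and> sign (vcons m (skip m)) = (-1) ^ m"
  using assms
proof (induction m)
  case 0
  have "vcons 0 (skip 0) = id"
    by (auto simp: fun_eq_iff vcons_def skip_def)
  then show ?case
    by (simp add: permutes_id del: id_apply)
next
  case (Suc m)
  then have IH: "vcons m (skip m) permutes {..<K}" "sign (vcons m (skip m)) = (-1) ^ m"
    by auto
  have transp: "Transposition.transpose m (Suc m) permutes {..<K}"
    using Suc.prems by (intro permutes_swap_id) auto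
  have split: "vcons (Suc m) (skip (Suc m)) = Transposition.transpose m (Suc m) \<circ> vcons m (skip m)"
    by (auto simp: fun_eq_iff vcons_def skip_def Transposition.transpose_def)
  have "permutation (vcons m (skip m))"
    using IH(1) permutation_permutes by blast
  then have "sign (Transposition.transpose m (Suc m) \<circ> vcons m (skip m)) = - sign (vcons m (skip m))"
    by (simp add: sign_compose[OF permutation_swap_id] sign_swap_id)
  then show ?case
    unfolding split using IH permutes_compose[OF IH(1) transp] by (simp del: comp_apply)
qed

lemma vcons_Suc_permutes:
  assumes "\<tau> permutes {..<k}"
  shows "vcons 0 (Suc \<circ> \<tau>) permutes {..<Suc k} \<and> sign (vcons 0 (Suc \<circ> \<tau>)) = sign \<tau>"
  using assms finite_lessThan
proof (induction rule: permutes_induct)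
  case id
  have "vcons 0 (Suc \<circ> id) = id"
    by (auto simp: fun_eq_iff vcons_def)
  then show ?case
    by (simp add: permutes_id del: id_apply)
next
  case (swap a b p)
  have split: "vcons 0 (Suc \<circ> (Transposition.transpose a b \<circ> p)) =
      Transposition.transpose (Suc a) (Suc b) \<circ> vcons 0 (Suc \<circ> p)"
    by (auto simp: fun_eq_iff vcons_def Transposition.transpose_def)
  have IH: "vcons 0 (Suc \<circ> p) permutes {..<Suc k}" "sign (vcons 0 (Suc \<circ> p)) = sign p"
    using swap.IH swap.hyps(4) by blast+
  have transp: "Transposition.transpose (Suc a) (Suc b) permutes {..<Suc k}"
    using swap.hyps by (intro permutes_swap_id) auto
  have "permutation p" "permutation (vcons 0 (Suc \<circ> p))"
    using swap.hyps(4) IH(1) permutation_permutes by blast+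
  then have "sign (Transposition.transpose (Suc a) (Suc b) \<circ> vcons 0 (Suc \<circ> p)) = - sign p"
    "sign (Transposition.transpose a b \<circ> p) = - sign p"
    using swap.hyps IH(2) by (simp_all add: sign_compose[OF permutation_swap_id] sign_swap_id)
  then show ?case
    unfolding split using permutes_compose[OF IH(1) transp] by (simp del: comp_apply)
qed

text \<open>A permutation of {0, ..., k} is encoded by its value m at 0 and a permutation \<tau> of the
  remaining k values, taken in increasing order.\<close>

lemma vcons_skip_comp_permutes:
  assumes "m < Suc k" and "\<tau> permutes {..<k}"
  shows "vcons m (skip m \<circ> \<tau>) permutes {..<Suc k}"
    and "sign (vcons m (skip m \<circ> \<tau>)) = (-1) ^ m * sign \<tau>"
proof -
  have split: "vcons m (skip m \<circ> \<tau>) = vcons m (skip m) \<circ> vcons 0 (Suc \<circ> \<tau>)"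
    by (simp add: comp_vcons o_assoc)
  note front = vcons_skip_permutes[OF assms(1)] and lift = vcons_Suc_permutes[OF assms(2)]
  show "vcons m (skip m \<circ> \<tau>) permutes {..<Suc k}"
    unfolding split using front lift permutes_compose by blast
  have "permutation (vcons m (skip m))" "permutation (vcons 0 (Suc \<circ> \<tau>))"
    using front lift permutation_permutes by blast+
  then show "sign (vcons m (skip m \<circ> \<tau>)) = (-1) ^ m * sign \<tau>"
    unfolding split using front lift by (simp add: sign_compose)
qed

lemma bij_betw_vcons_skip_comp:
  "bij_betw (\<lambda>(m, \<tau>). vcons m (skip m \<circ> \<tau>))
     ({..<Suc k} \<times> {\<tau>. \<tau> permutes {..<k}}) {\<sigma>. \<sigma> permutes {..<Suc k}}"
proof -
  let ?\<Phi> = "\<lambda>(m, \<tau>). vcons m (skip m \<circ> \<tau>)" and ?T = "{\<tau>. \<tau> permutes {..<k}}"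
  have inj: "inj_on ?\<Phi> ({..<Suc k} \<times> ?T)"
  proof (rule inj_onI, clarify)
    fix m \<tau> m' \<tau>'
    assume eq: "vcons m (skip m \<circ> \<tau>) = vcons m' (skip m' \<circ> \<tau>')"
    then have "m = m'"
      by (metis vcons_0)
    with eq have "skip m \<circ> \<tau> = skip m \<circ> \<tau>'"
      by (metis vcons_comp_Suc)
    then show "m = m' \<and> \<tau> = \<tau>'"
      using \<open>m = m'\<close> inj_skip by (metis fun.inj_map_strong inj_def)
  qed
  have sub: "?\<Phi> ` ({..<Suc k} \<times> ?T) \<subseteq> {\<sigma>. \<sigma> permutes {..<Suc k}}"
    using vcons_skip_comp_permutes(1) by auto
  have "card (?\<Phi> ` ({..<Suc k} \<times> ?T)) = card {\<sigma>. \<sigma> permutes {..<Suc k}}"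
    by (simp add: card_image[OF inj] card_cartesian_product card_permutations)
  then have "?\<Phi> ` ({..<Suc k} \<times> ?T) = {\<sigma>. \<sigma> permutes {..<Suc k}}"
    using card_subset_eq[OF _ sub] finite_permutations by blast
  with inj show ?thesis
    unfolding bij_betw_def by blast
qed

definition laplace_wedge :: "nat \<Rightarrow> 'n::finite form \<Rightarrow> 'n form \<Rightarrow> 'n form" where
  "laplace_wedge k \<theta> \<beta> v = (\<Sum>m<Suc k. (-1) ^ m * \<theta> (\<lambda>_. v m) * \<beta> (v \<circ> skip m))"

lemma wedge_eq_laplace_wedge:
  assumes \<theta>: "alt_form 1 \<theta>" and \<beta>: "alt_form k \<beta>"
  shows "wedge 1 k \<theta> \<beta> = laplace_wedge k \<theta> \<beta>"
proof
  fix v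
  let ?T = "{\<tau>. \<tau> permutes {..<k}}"
  define f where "f \<sigma> = of_int (sign \<sigma>) * \<theta> (\<lambda>i. v (\<sigma> i)) * \<beta> (\<lambda>i. v (\<sigma> (i + 1)))" for \<sigma>
  have summand: "f (vcons m (skip m \<circ> \<tau>)) = (-1) ^ m * \<theta> (\<lambda>_. v m) * \<beta> (v \<circ> skip m)"
    if m: "m < Suc k" and \<tau>: "\<tau> \<in> ?T" for m \<tau>
  proof -
    have "\<theta> (\<lambda>i. v (vcons m (skip m \<circ> \<tau>) i)) = \<theta> (\<lambda>_. v m)"
      by (rule alt_form_cong[OF \<theta>]) simp
    moreover have "\<beta> (\<lambda>i. v (vcons m (skip m \<circ> \<tau>) (i + 1))) = of_int (sign \<tau>) * \<beta> (v \<circ> skip m)"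
      using alt_form_permute[OF \<beta>, of \<tau> "v \<circ> skip m"] \<tau> by (simp add: comp_def)
    ultimately have "f (vcons m (skip m \<circ> \<tau>)) =
        (-1) ^ m * (of_int (sign \<tau>) * of_int (sign \<tau>)) * \<theta> (\<lambda>_. v m) * \<beta> (v \<circ> skip m)"
      using vcons_skip_comp_permutes(2)[OF m, of \<tau>] \<tau> unfolding f_def by (simp add: mult_ac)
    moreover have "(of_int (sign \<tau>) :: real) * of_int (sign \<tau>) = 1"
      by (metis of_int_1 of_int_mult sign_idempotent)
    ultimately show ?thesis
      by simp
  qed
  have "(\<Sum>\<sigma> | \<sigma> permutes {..<Suc k}. f \<sigma>) = (\<Sum>(m, \<tau>)\<in>{..<Suc k} \<times> ?T. f (vcons m (skip m \<circ> \<tau>)))"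
    using sum.reindex_bij_betw[OF bij_betw_vcons_skip_comp, of f] by (simp add: case_prod_unfold)
  also have "\<dots> = (\<Sum>m<Suc k. \<Sum>\<tau>\<in>?T. (-1) ^ m * \<theta> (\<lambda>_. v m) * \<beta> (v \<circ> skip m))"
    unfolding sum.cartesian_product[symmetric] using summand by (intro sum.cong) auto
  also have "\<dots> = fact k * laplace_wedge k \<theta> \<beta> v"
    by (simp add: laplace_wedge_def card_permutations sum_distrib_left del: sum.lessThan_Suc)
  finally show "wedge 1 k \<theta> \<beta> v = laplace_wedge k \<theta> \<beta> v"
    unfolding wedge_def f_def by simp
qed

lemma laplace_wedge_add_left:
  "laplace_wedge k (\<lambda>v. \<theta>\<^sub>1 v + \<theta>\<^sub>2 v) \<beta> u = laplace_wedge k \<theta>\<^sub>1 \<beta> u + laplace_wedge k \<theta>\<^sub>2 \<beta> u"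
  unfolding laplace_wedge_def by (simp add: distrib_left distrib_right sum.distrib del: sum.lessThan_Suc)

lemma laplace_wedge_add_right:
  "laplace_wedge k \<theta> (\<lambda>v. \<beta>\<^sub>1 v + \<beta>\<^sub>2 v) u = laplace_wedge k \<theta> \<beta>\<^sub>1 u + laplace_wedge k \<theta> \<beta>\<^sub>2 u"
  unfolding laplace_wedge_def by (simp add: distrib_left sum.distrib del: sum.lessThan_Suc)

lemma laplace_wedge_sum_right:
  "laplace_wedge k \<theta> (\<lambda>v. \<Sum>j\<in>S. c j * \<gamma> j v) u = (\<Sum>j\<in>S. c j * laplace_wedge k \<theta> (\<gamma> j) u)"
  unfolding laplace_wedge_def
  by (simp add: sum_distrib_left sum_distrib_right mult_ac del: sum.lessThan_Suc) (rule sum.swap)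

lemma sum_offdiag_antisym_eq_zero:
  fixes g :: "'a \<Rightarrow> 'a \<Rightarrow> 'b::{idom, ring_char_0}"
  assumes "finite A" and antisym: "\<And>m q. m \<in> A \<Longrightarrow> q \<in> A \<Longrightarrow> m \<noteq> q \<Longrightarrow> g m q = - g q m"
  shows "(\<Sum>m\<in>A. \<Sum>q\<in>A - {m}. g m q) = 0"
proof -
  define G where "G m q = (if q = m then 0 else g m q)" for m q
  have "(\<Sum>q\<in>A - {m}. g m q) = (\<Sum>q\<in>A. G m q)" if "m \<in> A" for m
    using sum.remove[OF \<open>finite A\<close> that, of "G m"] by (simp add: G_def)
  then have offdiag: "(\<Sum>m\<in>A. \<Sum>q\<in>A - {m}. g m q) = (\<Sum>m\<in>A. \<Sum>q\<in>A. G m q)"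
    by simp
  have "(\<Sum>m\<in>A. \<Sum>q\<in>A. G m q) = (\<Sum>q\<in>A. \<Sum>m\<in>A. G m q)"
    by (rule sum.swap)
  also have "\<dots> = (\<Sum>q\<in>A. \<Sum>m\<in>A. - G q m)"
  proof (intro sum.cong refl)
    fix q m
    assume "q \<in> A" "m \<in> A"
    then show "G m q = - G q m"
      using antisym[of m q] by (cases "m = q") (simp_all add: G_def)
  qed
  also have "\<dots> = - (\<Sum>m\<in>A. \<Sum>q\<in>A. G m q)"
    by (simp add: sum_negf)
  finally show ?thesis
    unfolding offdiag by simp
qed

lemma laplace_wedge_comp_skip:
  assumes "m < Suc (Suc K)"
  shows "laplace_wedge K \<theta> \<eta> (v \<circ> skip m) = (\<Sum>q\<in>{..<Suc (Suc K)} - {m}.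
    (-1) ^ unskip m q * \<theta> (\<lambda>_. v q) * \<eta> (v \<circ> skip m \<circ> skip (unskip m q)))"
proof -
  define h where "h p = (-1) ^ p * \<theta> (\<lambda>_. v (skip m p)) * \<eta> (v \<circ> skip m \<circ> skip p)" for p
  have "laplace_wedge K \<theta> \<eta> (v \<circ> skip m) = (\<Sum>p<Suc K. h p)"
    by (simp add: laplace_wedge_def h_def o_assoc del: sum.lessThan_Suc)
  also have "\<dots> = (\<Sum>q\<in>{..<Suc (Suc K)} - {m}. h (unskip m q))"
    using bij_betw_unskip[OF assms] by (simp add: sum.reindex_bij_betw del: sum.lessThan_Suc)
  also have "\<dots> = (\<Sum>q\<in>{..<Suc (Suc K)} - {m}.
      (-1) ^ unskip m q * \<theta> (\<lambda>_. v q) * \<eta> (v \<circ> skip m \<circ> skip (unskip m q)))"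
    by (intro sum.cong refl) (simp add: h_def skip_unskip)
  finally show ?thesis .
qed

lemma laplace_wedge_self_eq_zero: "laplace_wedge (Suc K) \<theta> (laplace_wedge K \<theta> \<eta>) v = 0"
proof -
  let ?A = "{..<Suc (Suc K)}"
  define g where "g m q = (-1) ^ (m + unskip m q) * \<theta> (\<lambda>_. v m) * \<theta> (\<lambda>_. v q) *
      \<eta> (v \<circ> skip m \<circ> skip (unskip m q))" for m q
  have "g m q = - g q m" if "q < m" for m q
  proof -
    have "unskip m q = q" "unskip q m = m - 1"
      using that by (auto simp: unskip_def)
    moreover have "v \<circ> skip m \<circ> skip q = v \<circ> skip q \<circ> skip (m - 1)"
      using skip_comp_skip[OF that] by (metis comp_assoc)
    moreover have "(-1 :: real) ^ (m + q) = - ((-1) ^ (q + (m - 1)))"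
      using that by (cases m) (simp_all add: add.commute)
    ultimately show ?thesis
      unfolding g_def by (simp only: mult_ac)
  qed
  then have antisym: "g m q = - g q m" if "m \<noteq> q" for m q
    using that by (metis minus_equation_iff nat_neq_iff)
  have "laplace_wedge (Suc K) \<theta> (laplace_wedge K \<theta> \<eta>) v =
      (\<Sum>m\<in>?A. (-1) ^ m * \<theta> (\<lambda>_. v m) * laplace_wedge K \<theta> \<eta> (v \<circ> skip m))"
    by (simp add: laplace_wedge_def del: sum.lessThan_Suc)
  also have "\<dots> = (\<Sum>m\<in>?A. \<Sum>q\<in>?A - {m}. g m q)"
    by (simp add: laplace_wedge_comp_skip g_def sum_distrib_left power_add mult_ac del: sum.lessThan_Suc)
  also have "\<dots> = 0"
    by (rule sum_offdiag_antisym_eq_zero) (auto intro: antisym)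
  finally show ?thesis .
qed

definition dx :: "'n::finite \<Rightarrow> 'n form" where
  "dx j v = v 0 $ j"

definition contract :: "real^'n \<Rightarrow> 'n::finite form \<Rightarrow> 'n form" where
  "contract a \<beta> w = \<beta> (vcons a w)"

definition linear_on_1forms :: "('n::finite form \<Rightarrow> 'n form) \<Rightarrow> bool" where
  "linear_on_1forms L \<longleftrightarrow> (\<forall>\<theta>\<^sub>1 \<theta>\<^sub>2 a b. alt_form 1 \<theta>\<^sub>1 \<longrightarrow> alt_form 1 \<theta>\<^sub>2 \<longrightarrow>
     L (\<lambda>v. a * \<theta>\<^sub>1 v + b * \<theta>\<^sub>2 v) = (\<lambda>v. a * L \<theta>\<^sub>1 v + b * L \<theta>\<^sub>2 v))"

lemma alt_form_dx: "alt_form 1 (dx j)"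
  unfolding alt_form_def dx_def by (auto simp: linear_iff)

lemma vcons_fun_upd: "vcons a (w(i := x)) = (vcons a w)(Suc i := x)"
  by (auto simp: fun_eq_iff vcons_def)

lemma alt_form_contract:
  fixes \<beta> :: "'n::finite form"
  assumes "alt_form (Suc k) \<beta>"
  shows "alt_form k (contract a \<beta>)"
  unfolding alt_form_def contract_def
proof (intro conjI allI impI)
  fix v w :: "nat \<Rightarrow> real^'n"
  assume "\<forall>i<k. v i = w i"
  then show "\<beta> (vcons a v) = \<beta> (vcons a w)"
    by (intro alt_form_cong[OF assms]) (auto simp: vcons_def)
next
  fix v :: "nat \<Rightarrow> real^'n" and i
  assume "i < k"
  then show "linear (\<lambda>x. \<beta> (vcons a (v(i := x))))"
    unfolding vcons_fun_upd by (intro alt_form_linear[OF assms]) simp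
next
  fix v :: "nat \<Rightarrow> real^'n" and i j
  assume "i < k \<and> j < k \<and> i \<noteq> j \<and> v i = v j"
  then show "\<beta> (vcons a v) = 0"
    by (intro alt_form_eq_zero[OF assms, of "Suc i" "Suc j"]) auto
qed

lemma linear_expansion:
  fixes g :: "real^'n::finite \<Rightarrow> real"
  assumes "linear g"
  shows "g x = (\<Sum>j\<in>UNIV. x $ j * g (axis j 1))"
proof -
  have "g x = g (\<Sum>j\<in>UNIV. x $ j *\<^sub>R axis j 1)"
    using basis_expansion[of x] by (simp add: scalar_mult_eq_scaleR)
  also have "\<dots> = (\<Sum>j\<in>UNIV. x $ j * g (axis j 1))"
    by (simp add: linear_sum[OF assms] linear_cmul[OF assms])
  finally show ?thesis .
qed

lemma alt_form_vcons_expansion: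
  fixes \<beta> :: "'n::finite form"
  assumes "alt_form (Suc k) \<beta>"
  shows "\<beta> (vcons x w) = (\<Sum>j\<in>UNIV. x $ j * \<beta> (vcons (axis j 1) w))"
proof -
  have update: "vcons y w = (vcons 0 w)(0 := y)" for y :: "real^'n"
    by (auto simp: fun_eq_iff vcons_def)
  have "linear (\<lambda>y. \<beta> ((vcons 0 w)(0 := y)))"
    by (rule alt_form_linear[OF assms]) simp
  from linear_expansion[OF this, of x] show ?thesis
    by (simp only: update[symmetric])
qed

lemma alt_form_1_expansion:
  assumes "alt_form 1 \<theta>"
  shows "\<theta> v = (\<Sum>j\<in>UNIV. \<theta> (\<lambda>_. axis j 1) * dx j v)"
proof -
  have "\<theta> v = \<theta> (vcons (v 0) v)"
    by (rule alt_form_cong[OF assms]) simp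
  also have "\<dots> = (\<Sum>j\<in>UNIV. v 0 $ j * \<theta> (vcons (axis j 1) v))"
    using alt_form_vcons_expansion assms by simp
  also have "\<dots> = (\<Sum>j\<in>UNIV. \<theta> (\<lambda>_. axis j 1) * dx j v)"
  proof -
    have "\<theta> (vcons (axis j 1) v) = \<theta> (\<lambda>_. axis j 1)" for j
      by (rule alt_form_cong[OF assms]) simp
    then show ?thesis
      by (simp add: dx_def mult.commute)
  qed
  finally show ?thesis .
qed

lemma linear_on_1forms_expansion:
  assumes "linear_on_1forms L" and "alt_form 1 \<theta>"
  shows "L \<theta> v = (\<Sum>j\<in>UNIV. \<theta> (\<lambda>_. axis j 1) * L (dx j) v)"
proof -
  have lin: "\<And>\<theta>\<^sub>1 \<theta>\<^sub>2 a b. alt_form 1 \<theta>\<^sub>1 \<Longrightarrow> alt_form 1 \<theta>\<^sub>2 \<Longrightarrow>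
      L (\<lambda>v. a * \<theta>\<^sub>1 v + b * \<theta>\<^sub>2 v) = (\<lambda>v. a * L \<theta>\<^sub>1 v + b * L \<theta>\<^sub>2 v)"
    using assms(1) unfolding linear_on_1forms_def by blast
  have sum: "L (\<lambda>v. \<Sum>j\<in>S. c j * dx j v) = (\<lambda>v. \<Sum>j\<in>S. c j * L (dx j) v)" if "finite S" for S c
    using that
  proof (induction S rule: finite_induct)
    case empty
    show ?case
      using lin[of "dx undefined" "dx undefined" 0 0, OF alt_form_dx alt_form_dx] by simp
  next
    case (insert i S)
    have "alt_form 1 (\<lambda>v. \<Sum>j\<in>S. c j * dx j v)"
      by (intro alt_form_sum alt_form_dx insert.hyps(1))
    then show ?case
      using lin[of "dx i" _ "c i" 1, OF alt_form_dx] insert by simp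
  qed
  have "L \<theta> = L (\<lambda>v. \<Sum>j\<in>UNIV. \<theta> (\<lambda>_. axis j 1) * dx j v)"
    using alt_form_1_expansion[OF assms(2)] by (intro arg_cong[where f = L] ext)
  also have "\<dots> = (\<lambda>v. \<Sum>j\<in>UNIV. \<theta> (\<lambda>_. axis j 1) * L (dx j) v)"
    by (rule sum[OF finite_class.finite_UNIV])
  finally show ?thesis
    by (rule fun_cong)
qed

lemma laplace_wedge_vcons:
  "laplace_wedge (Suc k) \<theta> \<beta> (vcons a v) = \<theta> (\<lambda>_. a) * \<beta> v - laplace_wedge k \<theta> (contract a \<beta>) v"
  unfolding laplace_wedge_def contract_def sum.lessThan_Suc_shift[of _ "Suc k"]
  by (simp add: sum_negf[symmetric] del: sum.lessThan_Suc)

lemma sum_laplace_wedge_dx_contract: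
  assumes "alt_form (Suc k) \<beta>"
  shows "(\<Sum>j\<in>UNIV. laplace_wedge k (dx j) (contract (axis j 1) \<beta>) v) = real (Suc k) * \<beta> v"
proof -
  have "(\<Sum>j\<in>UNIV. laplace_wedge k (dx j) (contract (axis j 1) \<beta>) v) =
      (\<Sum>m<Suc k. (-1) ^ m * (\<Sum>j\<in>UNIV. v m $ j * \<beta> (vcons (axis j 1) (v \<circ> skip m))))"
    unfolding laplace_wedge_def contract_def dx_def
    by (simp add: sum_distrib_left mult_ac del: sum.lessThan_Suc) (rule sum.swap)
  also have "\<dots> = (\<Sum>m<Suc k. (-1) ^ m * \<beta> (v \<circ> vcons m (skip m)))"
  proof -
    have "(\<Sum>j\<in>UNIV. v m $ j * \<beta> (vcons (axis j 1) (v \<circ> skip m))) = \<beta> (v \<circ> vcons m (skip m))" for m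
      using alt_form_vcons_expansion[OF assms, of "v m" "v \<circ> skip m"] by (simp add: comp_vcons)
    then show ?thesis
      by simp
  qed
  also have "\<dots> = (\<Sum>m<Suc k. \<beta> v)"
  proof (intro sum.cong refl)
    fix m
    assume "m \<in> {..<Suc k}"
    then have "\<beta> (v \<circ> vcons m (skip m)) = (-1) ^ m * \<beta> v"
      using alt_form_permute[OF assms] vcons_skip_permutes[of m "Suc k"] by simp
    then show "(-1) ^ m * \<beta> (v \<circ> vcons m (skip m)) = \<beta> v"
      by (simp flip: power_add mult_2)
  qed
  finally show ?thesis
    by simp
qed

lemma laplace_wedge_polarization:
  assumes lin: "linear_on_1forms L"
    and self: "\<And>\<theta>. alt_form 1 \<theta> \<Longrightarrow> laplace_wedge k \<theta> (L \<theta>) = (\<lambda>v. 0)"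
    and \<theta>: "alt_form 1 \<theta>" and \<phi>: "alt_form 1 \<phi>"
  shows "laplace_wedge k \<theta> (L \<phi>) v + laplace_wedge k \<phi> (L \<theta>) v = 0"
proof -
  have sum: "alt_form 1 (\<lambda>v. \<theta> v + \<phi> v)"
    using alt_form_lincomb[OF \<theta> \<phi>, of 1 1] by simp
  have "L (\<lambda>v. \<theta> v + \<phi> v) = (\<lambda>v. L \<theta> v + L \<phi> v)"
    using lin[unfolded linear_on_1forms_def, rule_format, OF \<theta> \<phi>, of 1 1] by simp
  then have "laplace_wedge k (\<lambda>v. \<theta> v + \<phi> v) (\<lambda>w. L \<theta> w + L \<phi> w) v = 0"
    using fun_cong[OF self[OF sum], of v] by simp
  then show ?thesis
    using self[OF \<theta>] self[OF \<phi>] by (simp add: laplace_wedge_add_left laplace_wedge_add_right)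
qed

lemma laplace_wedge_factorization:
  fixes L :: "'n::finite form \<Rightarrow> 'n form"
  assumes lin: "linear_on_1forms L"
    and alt: "\<And>\<theta>. alt_form 1 \<theta> \<Longrightarrow> alt_form (Suc k) (L \<theta>)"
    and self: "\<And>\<theta>. alt_form 1 \<theta> \<Longrightarrow> laplace_wedge (Suc k) \<theta> (L \<theta>) = (\<lambda>v. 0)"
    and \<theta>: "alt_form 1 \<theta>"
  shows "(real CARD('n) - real k) * L \<theta> v =
    (\<Sum>j\<in>UNIV. laplace_wedge k \<theta> (contract (axis j 1) (L (dx j))) v)"
proof -
  have "\<theta> (\<lambda>_. axis j 1) * L (dx j) v - laplace_wedge k \<theta> (contract (axis j 1) (L (dx j))) v
      + L \<theta> v - laplace_wedge k (dx j) (contract (axis j 1) (L \<theta>)) v = 0" for j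
    using laplace_wedge_polarization[OF lin self \<theta> alt_form_dx, of j "vcons (axis j 1) v"]
    by (simp add: laplace_wedge_vcons dx_def)
  then have "(\<Sum>j\<in>UNIV. \<theta> (\<lambda>_. axis j 1) * L (dx j) v - laplace_wedge k \<theta> (contract (axis j 1) (L (dx j))) v
      + L \<theta> v - laplace_wedge k (dx j) (contract (axis j 1) (L \<theta>)) v) = 0"
    by simp
  then have "(\<Sum>j\<in>UNIV. \<theta> (\<lambda>_. axis j 1) * L (dx j) v)
      - (\<Sum>j\<in>UNIV. laplace_wedge k \<theta> (contract (axis j 1) (L (dx j))) v)
      + (\<Sum>j\<in>(UNIV :: 'n set). L \<theta> v)
      - (\<Sum>j\<in>UNIV. laplace_wedge k (dx j) (contract (axis j 1) (L \<theta>)) v) = 0"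
    by (simp add: sum.distrib sum_subtractf)
  then show ?thesis
    using linear_on_1forms_expansion[OF lin \<theta>] sum_laplace_wedge_dx_contract[OF alt[OF \<theta>]]
    by (simp add: algebra_simps)
qed

lemma wedge_wedge_self:
  assumes \<theta>: "alt_form 1 \<theta>" and \<eta>: "alt_form K \<eta>" and "alt_form (Suc K) (wedge 1 K \<theta> \<eta>)"
  shows "wedge 1 (Suc K) \<theta> (wedge 1 K \<theta> \<eta>) = (\<lambda>v. 0)"
proof -
  have "wedge 1 (Suc K) \<theta> (wedge 1 K \<theta> \<eta>) = laplace_wedge (Suc K) \<theta> (laplace_wedge K \<theta> \<eta>)"
    using wedge_eq_laplace_wedge[OF \<theta> assms(3)] wedge_eq_laplace_wedge[OF \<theta> \<eta>] by simp
  also have "\<dots> = (\<lambda>v. 0)"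
    by (rule ext) (rule laplace_wedge_self_eq_zero)
  finally show ?thesis .
qed

lemma wedge_factorization_exists:
  fixes L :: "'n::finite form \<Rightarrow> 'n form"
  assumes lin: "linear_on_1forms L"
    and alt: "\<And>\<theta>. alt_form 1 \<theta> \<Longrightarrow> alt_form (Suc K) (L \<theta>)"
    and self: "\<And>\<theta>. alt_form 1 \<theta> \<Longrightarrow> wedge 1 (Suc K) \<theta> (L \<theta>) = (\<lambda>v. 0)"
    and "Suc K \<le> CARD('n)"
  shows "\<exists>\<eta>. alt_form K \<eta> \<and> (\<forall>\<theta>. alt_form 1 \<theta> \<longrightarrow> L \<theta> = wedge 1 K \<theta> \<eta>)"
proof -
  have self': "laplace_wedge (Suc K) \<theta> (L \<theta>) = (\<lambda>v. 0)" if "alt_form 1 \<theta>" for \<theta>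
    using self[OF that] wedge_eq_laplace_wedge[OF that alt[OF that]] by simp
  define c where "c = 1 / (real CARD('n) - real K)"
  define \<eta> where "\<eta> w = (\<Sum>j\<in>UNIV. c * contract (axis j 1) (L (dx j)) w)" for w
  have \<eta>: "alt_form K \<eta>"
    unfolding \<eta>_def by (intro alt_form_sum alt_form_contract alt alt_form_dx) simp
  moreover have "L \<theta> v = wedge 1 K \<theta> \<eta> v" if "alt_form 1 \<theta>" for \<theta> v
  proof -
    have "wedge 1 K \<theta> \<eta> v = c * (\<Sum>j\<in>UNIV. laplace_wedge K \<theta> (contract (axis j 1) (L (dx j))) v)"
      unfolding wedge_eq_laplace_wedge[OF that \<eta>] \<eta>_def laplace_wedge_sum_right
      by (simp add: sum_distrib_left)
    also have "\<dots> = L \<theta> v"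
      using laplace_wedge_factorization[OF lin alt self' that, of v, symmetric] assms(4)
      by (simp add: c_def)
    finally show ?thesis ..
  qed
  ultimately show ?thesis
    by auto
qed

theorem proposition4p1:
  fixes etabar :: "'n::finite form \<Rightarrow> 'n form" and k :: nat
  assumes "CARD('n) \<ge> 2" and "1 \<le> k" and "k \<le> CARD('n)"
    and "\<forall>\<theta>. alt_form 1 \<theta> \<longrightarrow> alt_form k (etabar \<theta>)"
    and "\<forall>\<theta>1 \<theta>2 a b. alt_form 1 \<theta>1 \<longrightarrow> alt_form 1 \<theta>2 \<longrightarrow>
           etabar (\<lambda>v. a * \<theta>1 v + b * \<theta>2 v) = (\<lambda>v. a * etabar \<theta>1 v + b * etabar \<theta>2 v)"
  shows "(\<exists>\<eta>. alt_form (k - 1) \<eta> \<and>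
            (\<forall>\<theta>. alt_form 1 \<theta> \<longrightarrow> etabar \<theta> = wedge 1 (k - 1) \<theta> \<eta>))
         \<longleftrightarrow> (\<forall>\<theta>. alt_form 1 \<theta> \<longrightarrow> wedge 1 k \<theta> (etabar \<theta>) = (\<lambda>v. 0))"
proof -
  obtain K where k: "k = Suc K"
    using assms(2) by (cases k) auto
  have alt: "alt_form (Suc K) (etabar \<theta>)" if "alt_form 1 \<theta>" for \<theta>
    using assms(4) that k by blast
  have lin: "linear_on_1forms etabar"
    using assms(5) unfolding linear_on_1forms_def .
  show ?thesis
  proof
    assume "\<exists>\<eta>. alt_form (k - 1) \<eta> \<and> (\<forall>\<theta>. alt_form 1 \<theta> \<longrightarrow> etabar \<theta> = wedge 1 (k - 1) \<theta> \<eta>)"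
    then obtain \<eta> where \<eta>: "alt_form K \<eta>" and factor: "\<And>\<theta>. alt_form 1 \<theta> \<Longrightarrow> etabar \<theta> = wedge 1 K \<theta> \<eta>"
      using k by auto
    show "\<forall>\<theta>. alt_form 1 \<theta> \<longrightarrow> wedge 1 k \<theta> (etabar \<theta>) = (\<lambda>v. 0)"
      using wedge_wedge_self[OF _ \<eta>] alt factor k by metis
  next
    assume "\<forall>\<theta>. alt_form 1 \<theta> \<longrightarrow> wedge 1 k \<theta> (etabar \<theta>) = (\<lambda>v. 0)"
    \<comment> \<open>k \<le> n makes the factor n + 1 - k positive.\<close>
    then show "\<exists>\<eta>. alt_form (k - 1) \<eta> \<and> (\<forall>\<theta>. alt_form 1 \<theta> \<longrightarrow> etabar \<theta> = wedge 1 (k - 1) \<theta> \<eta>)"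
      using wedge_factorization_exists[OF lin alt] assms(3) k by auto
  qed
qed

end
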